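(* Let $d\ge2$, $\Omega\subset\mathbb{R}^d$ a convex polytope, $\mathcal{T}_h$ a shape-regular simplicial triangulation of $\Omega$, $\varepsilon>0$, and let $V_h$, $\Pi_h$, $\Pi_h^c$, $b_h$ and $|||\cdot|||$ be as in the context. Then for every $v\in V_h$, $$\tfrac12|||v|||^2\le b_h(v,v).$$
   Context: For a simplex $K$ with vertices $a_1,\dots,a_{d+1}$ and barycentric coordinates $\lambda_i$, $Z_K=\mathbb{P}_2(K)\oplus\operatorname{span}\{\lambda_i^2\lambda_j-\lambda_i\lambda_j^2:i<j\}$ and $e_{ij}=a_j-a_i$. $Z_h=\{v\in H^1(\Omega): v|_K\in Z_K\ \forall K,\ v(a),\nabla v(a)\text{ single-valued at every vertex }a\}$; $V_h=\{v\in Z_h: v(a)=0,\ \nabla v(a)=0\text{ at every vertex }a\in\partial\Omega\}$. For $v\in Z_h$ and $K\in\mathcal{T}_h$, $\Pi_Kv=\sum_i v(a_i)\lambda_i+\sum_i\sum_{j\ne i}(e_{ij}\cdot\nabla v|_K)(a_i)\tfrac12\lambda_i\lambda_j$; $(\Pi_hv)|_K=\Pi_Kv$ and $\Pi_h^c=I-\Pi_h$. $\nabla_h^k$ denotes the elementwise $k$-th derivative. For $v,w\in V_h$: $b_h(v,w)=\varepsilon^2\bigl((\nabla_h^2\Pi_hv,\nabla_h^2\Pi_hw)+(\nabla_h^2\Pi_h^cv,\nabla_h^2\Pi_h^cw)\bigr)+(\nabla v,\nabla w)$ and $|||v|||=\bigl(\varepsilon^2\|\nabla_h^2v\|_{L^2}^2+\|\nabla_hv\|_{L^2}^2\bigr)^{1/2}$.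 *)

theory Defs
  imports "HOL-Analysis.Analysis"
begin

(* Points of R^d are elements of a euclidean_space 'a, d = DIM('a).
   A simplex K is given by its (finite, affinely independent) vertex set S,
   K = convex hull S. *)

definition simplex_verts :: "'a::euclidean_space set \<Rightarrow> bool" where
  "simplex_verts S \<longleftrightarrow> finite S \<and> card S = Suc DIM('a) \<and> \<not> affine_dependent S"

definition bary :: "'a::euclidean_space set \<Rightarrow> 'a \<Rightarrow> 'a \<Rightarrow> real" where
  "bary S p x = (THE l. (\<forall>q. q \<notin> S \<longrightarrow> l q = 0) \<and> (\<Sum>q\<in>S. l q) = 1
                        \<and> (\<Sum>q\<in>S. l q *\<^sub>R q) = x) p"

definition P2 :: "('a::euclidean_space \<Rightarrow> real) \<Rightarrow> bool" where
  "P2 f \<longleftrightarrow> (\<exists>(c::real) (b::'a) (A::'a \<Rightarrow> 'a). linear A \<and> (\<forall>x. f x = c + b \<bullet> x + x \<bullet> A x))"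

(* Z_K = P_2(K) + span{lambda_i^2 lambda_j - lambda_i lambda_j^2 : i<j}
   (span over ordered pairs i<>j is the same space) *)
definition ZK :: "'a::euclidean_space set \<Rightarrow> ('a \<Rightarrow> real) \<Rightarrow> bool" where
  "ZK S f \<longleftrightarrow> (\<exists>g (c :: 'a \<Rightarrow> 'a \<Rightarrow> real). P2 g \<and>
      (\<forall>x. f x = g x + (\<Sum>p\<in>S. \<Sum>q\<in>S - {p}.
          c p q * ((bary S p x)\<^sup>2 * bary S q x - bary S p x * (bary S q x)\<^sup>2))))"

(* conforming simplicial triangulation T (set of vertex sets) of Omega *)
definition triangulation :: "'a::euclidean_space set set \<Rightarrow> 'a set \<Rightarrow> bool" where
  "triangulation T \<Omega> \<longleftrightarrow> finite T \<and> T \<noteq> {} \<and> (\<forall>S\<in>T. simplex_verts S)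
     \<and> \<Union> ((\<lambda>S. convex hull S) ` T) = \<Omega>
     \<and> (\<forall>S\<in>T. \<forall>S'\<in>T. convex hull S \<inter> convex hull S' = convex hull (S \<inter> S'))"

definition inradius :: "'a::euclidean_space set \<Rightarrow> real" where
  "inradius K = Sup {r. \<exists>c. ball c r \<subseteq> K}"

definition shape_regular :: "real \<Rightarrow> 'a::euclidean_space set set \<Rightarrow> bool" where
  "shape_regular \<sigma> T \<longleftrightarrow> (\<forall>S\<in>T. diameter (convex hull S) \<le> \<sigma> * inradius (convex hull S))"

(* gradient of v|_K at a point a of K, as a linear map (directional derivatives) *)
definition gradK :: "('a::euclidean_space \<Rightarrow> real) \<Rightarrow> 'a set \<Rightarrow> 'a \<Rightarrow> 'a \<Rightarrow> real" where
  "gradK v S a = frechet_derivative v (at a within convex hull S)"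

(* Z_h: restrictions to elements lie in Z_K, v in H^1 (continuity),
   v and grad v single-valued at vertices *)
definition Zh :: "'a::euclidean_space set set \<Rightarrow> 'a set \<Rightarrow> ('a \<Rightarrow> real) \<Rightarrow> bool" where
  "Zh T \<Omega> v \<longleftrightarrow> continuous_on \<Omega> v
     \<and> (\<forall>S\<in>T. \<exists>f. ZK S f \<and> (\<forall>x\<in>convex hull S. v x = f x))
     \<and> (\<forall>S\<in>T. \<forall>S'\<in>T. \<forall>a\<in>S \<inter> S'. gradK v S a = gradK v S' a)"

definition Vh :: "'a::euclidean_space set set \<Rightarrow> 'a set \<Rightarrow> ('a \<Rightarrow> real) \<Rightarrow> bool" where
  "Vh T \<Omega> v \<longleftrightarrow> Zh T \<Omega> v \<and>
     (\<forall>S\<in>T. \<forall>a\<in>S. a \<in> frontier \<Omega> \<longrightarrow> v a = 0 \<and> gradK v S a = (\<lambda>_. 0))"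

definition PiK :: "'a::euclidean_space set \<Rightarrow> ('a \<Rightarrow> real) \<Rightarrow> 'a \<Rightarrow> real" where
  "PiK S v x = (\<Sum>p\<in>S. v p * bary S p x)
     + (\<Sum>p\<in>S. \<Sum>q\<in>S - {p}. gradK v S p (q - p) * (1/2) * bary S p x * bary S q x)"

definition pd :: "('a::euclidean_space \<Rightarrow> real) \<Rightarrow> 'a \<Rightarrow> 'a \<Rightarrow> real" where
  "pd f i x = frechet_derivative f (at x) i"

definition grad_sq :: "('a::euclidean_space \<Rightarrow> real) \<Rightarrow> 'a \<Rightarrow> real" where
  "grad_sq f x = (\<Sum>i\<in>Basis. (pd f i x)\<^sup>2)"

definition hess_sq :: "('a::euclidean_space \<Rightarrow> real) \<Rightarrow> 'a \<Rightarrow> real" where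
  "hess_sq f x = (\<Sum>i\<in>Basis. \<Sum>k\<in>Basis. (pd (\<lambda>y. pd f i y) k x)\<^sup>2)"

definition bh :: "real \<Rightarrow> 'a::euclidean_space set set \<Rightarrow> ('a \<Rightarrow> real) \<Rightarrow> real" where
  "bh \<epsilon> T v = \<epsilon>\<^sup>2 * ((\<Sum>S\<in>T. integral (convex hull S) (hess_sq (PiK S v)))
                 + (\<Sum>S\<in>T. integral (convex hull S) (hess_sq (\<lambda>x. v x - PiK S v x))))
             + (\<Sum>S\<in>T. integral (convex hull S) (grad_sq v))"

definition tnorm_sq :: "real \<Rightarrow> 'a::euclidean_space set set \<Rightarrow> ('a \<Rightarrow> real) \<Rightarrow> real" where
  "tnorm_sq \<epsilon> T v = \<epsilon>\<^sup>2 * (\<Sum>S\<in>T. integral (convex hull S) (hess_sq v))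
             + (\<Sum>S\<in>T. integral (convex hull S) (grad_sq v))"

end

theory Submission
  imports Defs
begin

(* On each simplex K the function v coincides with a polynomial, so in the interior of K its
   Hessian is the sum of the Hessians of Pi_K v and of v - Pi_K v, and the pointwise bound
   |A + B|^2 <= 2 |A|^2 + 2 |B|^2 for Frobenius norms integrates over K and sums over the mesh.
   The gradient terms of both sides agree. Neither the boundary conditions of V_h nor the
   geometry of Omega and of the mesh enter the argument. *)

lemma real_polynomial_function_has_derivative:
  "real_polynomial_function f \<Longrightarrow>
     \<exists>D. (\<forall>x. (f has_derivative D x) (at x)) \<and> (\<forall>h. real_polynomial_function (\<lambda>x. D x h))"
proof (induction rule: real_polynomial_function.induct)
  case (linear f)
  then show ?case
    by (intro exI[of _ "\<lambda>x. f"]) (auto intro: bounded_linear_imp_has_derivative)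
next
  case (const c)
  show ?case by (intro exI[of _ "\<lambda>x h. 0"]) auto
next
  case (add f g)
  then obtain Df Dg where
    "\<forall>x. (f has_derivative Df x) (at x)" "\<forall>h. real_polynomial_function (\<lambda>x. Df x h)"
    "\<forall>x. (g has_derivative Dg x) (at x)" "\<forall>h. real_polynomial_function (\<lambda>x. Dg x h)"
    by blast
  then show ?case
    by (intro exI[of _ "\<lambda>x h. Df x h + Dg x h"]) (auto intro: has_derivative_add)
next
  case (mult f g)
  then obtain Df Dg where
    "\<forall>x. (f has_derivative Df x) (at x)" "\<forall>h. real_polynomial_function (\<lambda>x. Df x h)"
    "\<forall>x. (g has_derivative Dg x) (at x)" "\<forall>h. real_polynomial_function (\<lambda>x. Dg x h)"
    by blast
  with mult.hyps show ?case
    by (intro exI[of _ "\<lambda>x h. f x * Dg x h + Df x h * g x"])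
      (auto intro!: real_polynomial_function.intros(3,4) has_derivative_mult)
qed

lemma real_polynomial_function_pd:
  assumes "real_polynomial_function f"
  shows "real_polynomial_function (pd f i)"
proof -
  obtain D where D: "\<And>x. (f has_derivative D x) (at x)"
    "\<And>h. real_polynomial_function (\<lambda>x. D x h)"
    using real_polynomial_function_has_derivative[OF assms] by blast
  have "pd f i = (\<lambda>x. D x i)"
    unfolding pd_def using D(1) frechet_derivative_at by metis
  with D(2) show ?thesis by simp
qed

lemma pd_add:
  assumes "f differentiable at x" and "g differentiable at x"
  shows "pd (\<lambda>y. f y + g y) i x = pd f i x + pd g i x"
proof -
  have "((\<lambda>y. f y + g y) has_derivative
          (\<lambda>h. frechet_derivative f (at x) h + frechet_derivative g (at x) h)) (at x)"
    using assms by (intro has_derivative_add) (simp_all add: frechet_derivative_works)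
  then show ?thesis
    unfolding pd_def by (metis frechet_derivative_at)
qed

lemma pd_eq_on_open:
  assumes "f differentiable at x" "open U" "x \<in> U" "\<And>y. y \<in> U \<Longrightarrow> f y = g y"
  shows "pd f i x = pd g i x"
  unfolding pd_def using frechet_derivative_transform_within_open[OF assms] by simp

lemma hess_sq_eq_on_open:
  assumes f: "real_polynomial_function f" and U: "open U" "x \<in> U"
    and vf: "\<And>y. y \<in> U \<Longrightarrow> v y = f y"
  shows "hess_sq v x = hess_sq f x"
proof -
  have first: "pd f i y = pd v i y" if "y \<in> U" for i y
    by (rule pd_eq_on_open[OF differentiable_at_real_polynomial_function[OF f] U(1) that])
      (simp add: vf)
  have "pd (pd f i) k x = pd (pd v i) k x" for i k
    by (rule pd_eq_on_open[OF differentiable_at_real_polynomial_function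
          [OF real_polynomial_function_pd[OF f]] U]) (simp add: first)
  then show ?thesis
    unfolding hess_sq_def by simp
qed

lemma hess_sq_add_le:
  assumes f: "real_polynomial_function f" and g: "real_polynomial_function g"
  shows "hess_sq (\<lambda>y. f y + g y) x \<le> 2 * hess_sq f x + 2 * hess_sq g x"
proof -
  have first: "pd (\<lambda>y. f y + g y) i = (\<lambda>y. pd f i y + pd g i y)" for i
    using pd_add[OF differentiable_at_real_polynomial_function[OF f]
        differentiable_at_real_polynomial_function[OF g]] by blast
  have second: "pd (pd (\<lambda>y. f y + g y) i) k x = pd (pd f i) k x + pd (pd g i) k x" for i k
    unfolding first
    by (intro pd_add differentiable_at_real_polynomial_function real_polynomial_function_pd f g)
  have sq_sum_le: "(a + b)\<^sup>2 \<le> 2 * a\<^sup>2 + 2 * b\<^sup>2" for a b :: real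
    using zero_le_power2[of "a - b"] unfolding power2_sum power2_diff by linarith
  have "hess_sq (\<lambda>y. f y + g y) x
      = (\<Sum>i\<in>Basis. \<Sum>k\<in>Basis. (pd (pd f i) k x + pd (pd g i) k x)\<^sup>2)"
    unfolding hess_sq_def second ..
  also have "\<dots>
      \<le> (\<Sum>i\<in>Basis. \<Sum>k\<in>Basis. 2 * (pd (pd f i) k x)\<^sup>2 + 2 * (pd (pd g i) k x)\<^sup>2)"
    by (intro sum_mono sq_sum_le)
  also have "\<dots> = 2 * hess_sq f x + 2 * hess_sq g x"
    unfolding hess_sq_def sum.distrib sum_distrib_left ..
  finally show ?thesis .
qed

lemma real_polynomial_function_hess_sq:
  "real_polynomial_function f \<Longrightarrow> real_polynomial_function (hess_sq f)"
  unfolding hess_sq_def[abs_def] by (intro real_polynomial_function_sum real_polynomial_function_power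
      real_polynomial_function_pd finite_Basis)

lemma bary_coordinates_unique:
  assumes "simplex_verts S"
  shows "\<exists>!l. (\<forall>q. q \<notin> S \<longrightarrow> l q = 0) \<and> (\<Sum>q\<in>S. l q) = 1 \<and> (\<Sum>q\<in>S. l q *\<^sub>R q) = x"
proof -
  have fin: "finite S" and indep: "\<not> affine_dependent S" and card: "card S = Suc DIM('a)"
    using assms unfolding simplex_verts_def by auto
  have "aff_dim S = DIM('a)"
    using aff_dim_affine_independent[OF indep] card by simp
  then have "affine hull S = UNIV"
    using aff_dim_eq_full by blast
  then obtain u where u: "sum u S = 1" "(\<Sum>q\<in>S. u q *\<^sub>R q) = x"
    using affine_hull_finite[OF fin] by blast
  show ?thesis
  proof (rule ex1I[of _ "\<lambda>q. if q \<in> S then u q else 0"])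
    fix l
    assume l: "(\<forall>q. q \<notin> S \<longrightarrow> l q = 0) \<and> (\<Sum>q\<in>S. l q) = 1 \<and> (\<Sum>q\<in>S. l q *\<^sub>R q) = x"
    have "sum (\<lambda>q. l q - u q) S = 0" "(\<Sum>q\<in>S. (l q - u q) *\<^sub>R q) = 0"
      using l u by (simp_all add: sum_subtractf scaleR_left_diff_distrib)
    then have "\<forall>q\<in>S. l q - u q = 0"
      using indep affine_dependent_explicit_finite[OF fin] by blast
    with l show "l = (\<lambda>q. if q \<in> S then u q else 0)"
      by (auto simp: fun_eq_iff)
  qed (use u in simp)
qed

lemma
  assumes "simplex_verts S"
  shows sum_bary: "(\<Sum>q\<in>S. bary S q x) = 1"
    and sum_bary_scaleR: "(\<Sum>q\<in>S. bary S q x *\<^sub>R q) = x"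
  using theI'[OF bary_coordinates_unique[OF assms, of x]] unfolding bary_def by blast+

lemma bary_eqI:
  assumes "simplex_verts S" "p \<in> S" "(\<Sum>q\<in>S. u q) = 1" "(\<Sum>q\<in>S. u q *\<^sub>R q) = x"
  shows "bary S p x = u p"
proof -
  have "(THE l. (\<forall>q. q \<notin> S \<longrightarrow> l q = 0) \<and> (\<Sum>q\<in>S. l q) = 1 \<and> (\<Sum>q\<in>S. l q *\<^sub>R q) = x)
      = (\<lambda>q. if q \<in> S then u q else 0)"
    using assms by (intro the1_equality[OF bary_coordinates_unique[OF assms(1)]]) simp
  then show ?thesis
    unfolding bary_def using assms(2) by simp
qed

lemma bary_add_scaleR:
  assumes "simplex_verts S" "p \<in> S"
  shows "bary S p (x + c *\<^sub>R y) = bary S p x + c * (bary S p y - bary S p 0)"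
proof (rule bary_eqI[OF assms])
  show "(\<Sum>q\<in>S. bary S q x + c * (bary S q y - bary S q 0)) = 1"
    by (simp add: sum.distrib sum_subtractf flip: sum_distrib_left add: sum_bary[OF assms(1)])
  have "(\<Sum>q\<in>S. (bary S q x + c * (bary S q y - bary S q 0)) *\<^sub>R q)
      = (\<Sum>q\<in>S. bary S q x *\<^sub>R q) + c *\<^sub>R ((\<Sum>q\<in>S. bary S q y *\<^sub>R q) - (\<Sum>q\<in>S. bary S q 0 *\<^sub>R q))"
    by (simp add: algebra_simps sum.distrib sum_subtractf scaleR_sum_right)
  then show "(\<Sum>q\<in>S. (bary S q x + c * (bary S q y - bary S q 0)) *\<^sub>R q) = x + c *\<^sub>R y"
    by (simp add: sum_bary_scaleR[OF assms(1)])
qed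

lemma real_polynomial_function_bary:
  assumes "simplex_verts S" "p \<in> S"
  shows "real_polynomial_function (bary S p)"
proof -
  let ?L = "\<lambda>x. bary S p x - bary S p 0"
  have "linear ?L"
    by (rule linearI) (simp_all add: bary_add_scaleR[OF assms, of _ 1, simplified]
        bary_add_scaleR[OF assms, of 0, simplified])
  then have "real_polynomial_function (\<lambda>x. bary S p 0 + ?L x)"
    by (intro real_polynomial_function.intros(1-3)) (simp add: linear_conv_bounded_linear)
  then show ?thesis
    by simp
qed

lemma real_polynomial_function_P2:
  assumes "P2 g"
  shows "real_polynomial_function g"
proof -
  obtain c b A where A: "bounded_linear A" and g: "\<And>x. g x = c + b \<bullet> x + x \<bullet> A x"
    using assms unfolding P2_def linear_conv_bounded_linear by blast
  have A_coord: "real_polynomial_function (\<lambda>x. A x \<bullet> i)" for i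
    unfolding real_polynomial_function_eq
    by (intro polynomial_function_inner polynomial_function_bounded_linear A)
  have "g = (\<lambda>x. c + b \<bullet> x + (\<Sum>i\<in>Basis. (x \<bullet> i) * (A x \<bullet> i)))"
    by (simp add: fun_eq_iff g euclidean_inner[of _ "A _"])
  then show ?thesis
    by (simp only:) (intro real_polynomial_function.intros(2-4) real_polynomial_function_sum
        finite_Basis A_coord real_polynomial_function.intros(1) bounded_linear_inner_left
        bounded_linear_inner_right)
qed

lemma real_polynomial_function_ZK:
  assumes "simplex_verts S" "ZK S f"
  shows "real_polynomial_function f"
proof -
  have "finite S"
    using assms(1) unfolding simplex_verts_def by simp
  obtain g c where "P2 g" and f: "\<And>x. f x = g x + (\<Sum>p\<in>S. \<Sum>q\<in>S - {p}.
      c p q * ((bary S p x)\<^sup>2 * bary S q x - bary S p x * (bary S q x)\<^sup>2))"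
    using assms(2) unfolding ZK_def by blast
  show ?thesis
    unfolding f[abs_def]
    using \<open>finite S\<close> real_polynomial_function_P2[OF \<open>P2 g\<close>] real_polynomial_function_bary[OF assms(1)]
    by (intro real_polynomial_function.intros(2-4) real_polynomial_function_sum
        real_polynomial_function_diff real_polynomial_function_power) auto
qed

lemma real_polynomial_function_PiK:
  assumes "simplex_verts S"
  shows "real_polynomial_function (PiK S v)"
proof -
  have "finite S"
    using assms unfolding simplex_verts_def by simp
  then show ?thesis
    unfolding PiK_def[abs_def] using real_polynomial_function_bary[OF assms]
    by (intro real_polynomial_function.intros(2-4) real_polynomial_function_sum) auto
qed

lemma integrable_continuous_compact:
  fixes f :: "'a::euclidean_space \<Rightarrow> real"
  assumes "compact S" and "continuous_on S f"
  shows "f integrable_on S"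
  using borel_integrable_compact[OF assms] set_borel_integral_eq_integral(1)
  unfolding set_integrable_def by blast

lemma integrable_real_polynomial_function:
  "compact S \<Longrightarrow> real_polynomial_function f \<Longrightarrow> f integrable_on S"
  by (metis integrable_continuous_compact continuous_on_polymonial_function real_polynomial_function_eq)

(* The derivatives in hess_sq are taken at points of the whole space, so for piecewise polynomial
   v they are junk on element boundaries; this is harmless since the frontier of K is negligible. *)
lemma integral_hess_sq_le_split:
  fixes K :: "'a::euclidean_space set"
  assumes K: "compact K" "convex K"
    and f: "real_polynomial_function f" and vf: "\<And>x. x \<in> K \<Longrightarrow> v x = f x"
    and P: "real_polynomial_function P"
  shows "integral K (hess_sq v)
           \<le> 2 * integral K (hess_sq P) + 2 * integral K (hess_sq (\<lambda>x. v x - P x))"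
proof -
  have fP: "real_polynomial_function (\<lambda>x. f x - P x)"
    using f P by blast
  have interior: "x \<in> interior K" if "x \<in> K - frontier K" for x
    using that K by (simp add: frontier_def compact_imp_closed)
  have vf_interior: "\<And>y. y \<in> interior K \<Longrightarrow> v y = f y"
    using vf interior_subset by blast
  have v_f: "integral K (hess_sq v) = integral K (hess_sq f)"
    by (rule integral_spike[OF negligible_convex_frontier[OF K(2)], symmetric])
      (rule hess_sq_eq_on_open[OF f open_interior interior vf_interior])
  have vP_fP: "integral K (hess_sq (\<lambda>x. v x - P x)) = integral K (hess_sq (\<lambda>x. f x - P x))"
    by (rule integral_spike[OF negligible_convex_frontier[OF K(2)], symmetric])
      (rule hess_sq_eq_on_open[OF fP open_interior interior]; simp add: vf_interior)
  have "hess_sq f x \<le> 2 * hess_sq P x + 2 * hess_sq (\<lambda>x. f x - P x) x" for x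
    using hess_sq_add_le[OF P fP, of x] by simp
  moreover have "hess_sq h integrable_on K" if "real_polynomial_function h" for h
    using integrable_real_polynomial_function[OF K(1) real_polynomial_function_hess_sq[OF that]] .
  ultimately have "integral K (hess_sq f)
      \<le> integral K (\<lambda>x. 2 * hess_sq P x + 2 * hess_sq (\<lambda>x. f x - P x) x)"
    using f P fP by (intro integral_le integrable_add integrable_cmul) auto
  also have "\<dots> = 2 * integral K (hess_sq P) + 2 * integral K (hess_sq (\<lambda>x. f x - P x))"
    using f P fP integrable_real_polynomial_function[OF K(1) real_polynomial_function_hess_sq]
    by (simp add: integral_add integrable_cmul)
  finally show ?thesis
    unfolding v_f vP_fP .
qed

lemma integral_hess_sq_le_PiK_split:
  assumes S: "simplex_verts S" and f: "ZK S f" and vf: "\<forall>x\<in>convex hull S. v x = f x"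
  shows "integral (convex hull S) (hess_sq v)
           \<le> 2 * integral (convex hull S) (hess_sq (PiK S v))
             + 2 * integral (convex hull S) (hess_sq (\<lambda>x. v x - PiK S v x))"
proof -
  have "compact (convex hull S)"
    using S unfolding simplex_verts_def by (intro compact_convex_hull finite_imp_compact) simp
  then show ?thesis
    by (rule integral_hess_sq_le_split[OF _ convex_convex_hull real_polynomial_function_ZK[OF S f]
          vf[rule_format] real_polynomial_function_PiK[OF S]])
qed

lemma integral_grad_sq_nonneg: "0 \<le> integral K (grad_sq v)"
proof (cases "grad_sq v integrable_on K")
  case True
  then show ?thesis
    by (rule integral_nonneg) (simp add: grad_sq_def sum_nonneg)
qed (simp add: not_integrable_integral)

theorem mainTheorem4:
  fixes \<Omega> :: "'a::euclidean_space set" and T :: "'a set set"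
    and \<epsilon> \<sigma> :: real and v :: "'a \<Rightarrow> real"
  assumes "DIM('a) \<ge> 2"
    and "polytope \<Omega>" and "convex \<Omega>" and "interior \<Omega> \<noteq> {}"
    and "triangulation T \<Omega>" and "\<sigma> > 0" and "shape_regular \<sigma> T"
    and "\<epsilon> > 0"
    and "Vh T \<Omega> v"
  shows "(1/2) * tnorm_sq \<epsilon> T v \<le> bh \<epsilon> T v"
proof -
  let ?I = "\<lambda>S f. integral (convex hull S) (hess_sq f)"
  have simplices: "\<forall>S\<in>T. simplex_verts S"
    using assms(5) unfolding triangulation_def by (elim conjE) assumption
  have piecewise_ZK: "\<forall>S\<in>T. \<exists>f. ZK S f \<and> (\<forall>x\<in>convex hull S. v x = f x)"
    using assms(9) unfolding Vh_def Zh_def by (elim conjE) assumption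
  have elementwise: "?I S v \<le> 2 * ?I S (PiK S v) + 2 * ?I S (\<lambda>x. v x - PiK S v x)"
    if S: "S \<in> T" for S
  proof -
    obtain f where "ZK S f" "\<forall>x\<in>convex hull S. v x = f x"
      using bspec[OF piecewise_ZK S] by (elim exE conjE)
    then show ?thesis
      by (intro integral_hess_sq_le_PiK_split bspec[OF simplices S])
  qed
  have "(\<Sum>S\<in>T. ?I S v)
      \<le> 2 * (\<Sum>S\<in>T. ?I S (PiK S v)) + 2 * (\<Sum>S\<in>T. ?I S (\<lambda>x. v x - PiK S v x))"
    using sum_mono[OF elementwise] by (simp add: sum.distrib sum_distrib_left)
  then have "\<epsilon>\<^sup>2 * (\<Sum>S\<in>T. ?I S v)
      \<le> \<epsilon>\<^sup>2 * (2 * (\<Sum>S\<in>T. ?I S (PiK S v)) + 2 * (\<Sum>S\<in>T. ?I S (\<lambda>x. v x - PiK S v x)))"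
    by (simp add: mult_left_mono)
  moreover have "0 \<le> (\<Sum>S\<in>T. integral (convex hull S) (grad_sq v))"
    by (intro sum_nonneg integral_grad_sq_nonneg)
  ultimately show ?thesis
    unfolding tnorm_sq_def bh_def by (simp add: algebra_simps)
qed

end
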